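(* Let $\mathcal{M}=\{T_1,\ldots,T_m\}$ be a multiset of primitive strings, each of length at least $2$, with total length $N$. Let $a,b\in\{1,\ldots,m\}$ and positions $i$ of $T_a$ and $j$ of $T_b$. Let $U$ be the LMS-prefix of $\mathrm{conj}_i(T_a)$, with $i'$ the (LMS) position of $T_a$ at which $U$ ends, and let $V$ be the LMS-prefix of $\mathrm{conj}_j(T_b)$, with $j'$ the position of $T_b$ at which $V$ ends. Run the procedure Induced Sorting (described in the context) with some initial order of the LMS positions, and let $k_1$ and $k_2$ be the positions of $(i,a)$ and $(j,b)$, respectively, in the array $A$ at the end of the procedure. Then: (1) if $U<_{LMS}V$, then $k_1<k_2$; (2) if $U=V$, then $k_1<k_2$ if and only if $(i',a)$ was placed before $(j',b)$ in $A$ at the start of the procedure.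
   Context: For $T=T[1..n]$, $\mathrm{conj}_i(T)=T[i..n]T[1..i-1]$. Strings are viewed cyclically. For a primitive string $T$ of length $\ge2$, position $i$ is of type S if $\mathrm{conj}_i(T)<_{\mathrm{lex}}\mathrm{conj}_{i+1}(T)$ and of type L otherwise ($>_{\mathrm{lex}}$); an S-type position $i$ is LMS if $i-1$ (cyclically) is L-type. The LMS-prefix of $\mathrm{conj}_i(T)$ is the cyclic substring of $T$ from position $i$ to the first LMS position strictly after $i$ (cyclically; if $i$ is the only LMS position this wraps around to $i$ again). LMS-order: for LMS-prefixes $U,V$, $U<_{LMS}V$ if $V$ is a proper prefix of $U$, or neither is a prefix of the other and $U<_{\mathrm{lex}}V$. Procedure Induced Sorting: $A[1..N]$ is an array of entries $(j,d)$ (standing for $\mathrm{conj}_j(T_d)$), divided into consecutive buckets, one per character $c$ in increasing character order, the bucket of $c$ having size equal to the total number of occurrences of $c$ in the strings of $\mathcal{M}$. (1) Given an order of all LMS positions $(j,d)$, place them at the end of their buckets (bucket of $T_d[j]$), preserving the given order within each bucket; set the head pointer of each bucket to its first position. (2) Scan $A$ left to right; for each nonempty entry $(j,d)$ such that position $j-1$ of $T_d$ is L-type, write $(j-1,d)$ at the head of the bucket of $T_d[j-1]$ and increment that head. (3) Set the tail pointer of each bucket to its last position; scan $A$ right to left; for each nonempty entry $(j,d)$ such that position $j-1$ of $T_d$ is S-type, write $(j-1,d)$ at the tail of the bucket of $T_d[j-1]$ (overwriting) and decrement that tail. *)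

theory Defs
  imports Main "HOL-Library.Sublist"
begin

(* Conventions: strings are lists over a linearly ordered alphabet 'a;
   positions are 0-based (position p of T means T ! p, p < length T). *)

definition primitive :: "'a list \<Rightarrow> bool" where
  "primitive T \<longleftrightarrow> T \<noteq> [] \<and> \<not> (\<exists>u k. k \<ge> 2 \<and> T = concat (replicate k u))"

(* conj_i(T) = T[i..n] T[1..i-1]  (0-based: drop i T @ take i T) *)
definition conj :: "'a list \<Rightarrow> nat \<Rightarrow> 'a list" where
  "conj T i = drop i T @ take i T"

definition nxt :: "'a list \<Rightarrow> nat \<Rightarrow> nat" where
  "nxt T i = (i + 1) mod length T"

definition prv :: "'a list \<Rightarrow> nat \<Rightarrow> nat" where
  "prv T i = (i + length T - 1) mod length T"

definition is_S :: "'a::linorder list \<Rightarrow> nat \<Rightarrow> bool" where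
  "is_S T i \<longleftrightarrow> ord_class.lexordp (conj T i) (conj T (nxt T i))"

definition is_L :: "'a::linorder list \<Rightarrow> nat \<Rightarrow> bool" where
  "is_L T i \<longleftrightarrow> ord_class.lexordp (conj T (nxt T i)) (conj T i)"

definition is_LMS :: "'a::linorder list \<Rightarrow> nat \<Rightarrow> bool" where
  "is_LMS T i \<longleftrightarrow> is_S T i \<and> is_L T (prv T i)"

(* distance from i to the first LMS position strictly after i (cyclically);
   equals length T if i is the only LMS position *)
definition lms_dist :: "'a::linorder list \<Rightarrow> nat \<Rightarrow> nat" where
  "lms_dist T i = (LEAST d. 0 < d \<and> is_LMS T ((i + d) mod length T))"

definition lms_end :: "'a::linorder list \<Rightarrow> nat \<Rightarrow> nat" where
  "lms_end T i = (i + lms_dist T i) mod length T"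

definition lms_prefix :: "'a::linorder list \<Rightarrow> nat \<Rightarrow> 'a list" where
  "lms_prefix T i = map (\<lambda>k. T ! ((i + k) mod length T)) [0..<lms_dist T i + 1]"

definition lms_less :: "'a::linorder list \<Rightarrow> 'a list \<Rightarrow> bool" where
  "lms_less U V \<longleftrightarrow> strict_prefix V U \<or>
     (\<not> prefix U V \<and> \<not> prefix V U \<and> ord_class.lexordp U V)"

definition total_len :: "'a list list \<Rightarrow> nat" where
  "total_len Ts = sum_list (map length Ts)"

(* first index of the bucket of c *)
definition bstart :: "'a::linorder list list \<Rightarrow> 'a \<Rightarrow> nat" where
  "bstart Ts c = sum_list (map (\<lambda>T. length (filter (\<lambda>x. x < c) T)) Ts)"

(* one past the last index of the bucket of c *)
definition bend :: "'a::linorder list list \<Rightarrow> 'a \<Rightarrow> nat" where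
  "bend Ts c = sum_list (map (\<lambda>T. length (filter (\<lambda>x. x \<le> c) T)) Ts)"

type_synonym arr = "(nat \<times> nat) option list"

(* Step 1: place LMS positions at the ends of their buckets, preserving the
   given order within each bucket.  Implemented by processing the given order
   from its last element backwards with (exclusive) tail pointers. *)
definition step1_put :: "'a::linorder list list \<Rightarrow> arr \<times> ('a \<Rightarrow> nat) \<Rightarrow> nat \<times> nat \<Rightarrow> arr \<times> ('a \<Rightarrow> nat)" where
  "step1_put Ts st x = (case st of (A, tp) \<Rightarrow> (case x of (j, d) \<Rightarrow>
      let c = Ts ! d ! j in (A[tp c - 1 := Some (j, d)], tp(c := tp c - 1))))"

definition step1 :: "'a::linorder list list \<Rightarrow> (nat \<times> nat) list \<Rightarrow> arr" where
  "step1 Ts ord = fst (foldl (step1_put Ts) (replicate (total_len Ts) None, bend Ts) (rev ord))"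

definition step2_at :: "'a::linorder list list \<Rightarrow> arr \<times> ('a \<Rightarrow> nat) \<Rightarrow> nat \<Rightarrow> arr \<times> ('a \<Rightarrow> nat)" where
  "step2_at Ts st p = (case st of (A, hp) \<Rightarrow> (case A ! p of
      None \<Rightarrow> (A, hp)
    | Some (j, d) \<Rightarrow> (let j' = prv (Ts ! d) j; c = Ts ! d ! j' in
        if is_L (Ts ! d) j' then (A[hp c := Some (j', d)], hp(c := hp c + 1)) else (A, hp))))"

definition step2 :: "'a::linorder list list \<Rightarrow> arr \<Rightarrow> arr" where
  "step2 Ts A = fst (foldl (step2_at Ts) (A, bstart Ts) [0..<total_len Ts])"

(* Step 3: right-to-left scan inducing S-type positions (overwriting);
   tail pointers are kept exclusive: the tail position of bucket c is tp c - 1 *)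
definition step3_at :: "'a::linorder list list \<Rightarrow> arr \<times> ('a \<Rightarrow> nat) \<Rightarrow> nat \<Rightarrow> arr \<times> ('a \<Rightarrow> nat)" where
  "step3_at Ts st p = (case st of (A, tp) \<Rightarrow> (case A ! p of
      None \<Rightarrow> (A, tp)
    | Some (j, d) \<Rightarrow> (let j' = prv (Ts ! d) j; c = Ts ! d ! j' in
        if is_S (Ts ! d) j' then (A[tp c - 1 := Some (j', d)], tp(c := tp c - 1)) else (A, tp))))"

definition step3 :: "'a::linorder list list \<Rightarrow> arr \<Rightarrow> arr" where
  "step3 Ts A = fst (foldl (step3_at Ts) (A, bend Ts) (rev [0..<total_len Ts]))"

definition induced_sort :: "'a::linorder list list \<Rightarrow> (nat \<times> nat) list \<Rightarrow> arr" where
  "induced_sort Ts ord = step3 Ts (step2 Ts (step1 Ts ord))"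

definition lms_positions :: "'a::linorder list list \<Rightarrow> (nat \<times> nat) set" where
  "lms_positions Ts = {(j, d). d < length Ts \<and> j < length (Ts ! d) \<and> is_LMS (Ts ! d) j}"

end

theory Submission
  imports Defs "HOL-Library.Product_Lexorder"
begin

lemma nxt_less: "i < length T \<Longrightarrow> nxt T i < length T"
  unfolding nxt_def by (cases T) auto

lemma prv_less: "i < length T \<Longrightarrow> prv T i < length T"
  unfolding prv_def by (cases T) auto

lemma nxt_prv:
  assumes "i < length T"
  shows "nxt T (prv T i) = i"
proof -
  have "Suc (i + length T - 1) = i + length T"
    using assms by simp
  then show ?thesis
    using assms unfolding nxt_def prv_def by (simp add: mod_Suc_eq)
qed

lemma prv_nxt:
  assumes "i < length T"
  shows "prv T (nxt T i) = i"
proof -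
  have "prv T (nxt T i) = (Suc i mod length T + (length T - 1)) mod length T"
    using assms unfolding nxt_def prv_def by (simp add: Nat.add_diff_assoc)
  also have "\<dots> = (Suc i + (length T - 1)) mod length T"
    by (rule mod_add_left_eq)
  also have "Suc i + (length T - 1) = i + length T"
    using assms by simp
  finally show ?thesis
    using assms by simp
qed

lemma conj_eq_rotate: "i < length T \<Longrightarrow> conj T i = rotate i T"
  unfolding conj_def by (simp add: rotate_drop_take)

lemma rotate_nxt: "rotate (nxt T i) T = rotate (Suc i) T"
  unfolding nxt_def by (metis Suc_eq_plus1 rotate_conv_mod)

lemma is_S_iff_rotate:
  "i < length T \<Longrightarrow> is_S T i \<longleftrightarrow> ord_class.lexordp (rotate i T) (rotate (Suc i) T)"
  unfolding is_S_def by (simp add: conj_eq_rotate nxt_less rotate_nxt)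

lemma is_L_iff_rotate:
  "i < length T \<Longrightarrow> is_L T i \<longleftrightarrow> ord_class.lexordp (rotate (Suc i) T) (rotate i T)"
  unfolding is_L_def by (simp add: conj_eq_rotate nxt_less rotate_nxt)

lemma primitive_not_constant:
  assumes "primitive T" "2 \<le> length T"
  shows "\<exists>k<length T. T ! k \<noteq> T ! nxt T k"
proof (rule ccontr)
  assume "\<not> ?thesis"
  then have step: "T ! k = T ! Suc k" if "Suc k < length T" for k
    using that unfolding nxt_def by auto
  have "T ! k = T ! 0" if "k < length T" for k
    using that by (induction k) (auto simp: step)
  then have "T = replicate (length T) (T ! 0)"
    by (simp add: nth_equalityI)
  then have "T = concat (replicate (length T) [T ! 0])"
    by simp
  with assms show False
    unfolding primitive_def by blast
qed

lemma rotate_neq_rotate_Suc: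
  assumes "primitive T" "2 \<le> length T"
  shows "rotate i T \<noteq> rotate (Suc i) T"
proof
  assume "rotate i T = rotate (Suc i) T"
  then have fix1: "rotate1 R = R" if "R = rotate i T" for R
    using that by simp
  have "rotate m (rotate i T) = rotate i T" for m
    by (induction m) (simp_all add: fix1)
  moreover have "(length T - i mod length T + i) mod length T = 0"
  proof -
    have "0 < length T"
      using assms(2) by linarith
    then have "i mod length T \<le> length T"
      by (meson less_imp_le mod_less_divisor)
    then show ?thesis
      by (metis mod_add_right_eq le_add_diff_inverse2 mod_self)
  qed
  then have "rotate (length T - i mod length T) (rotate i T) = T"
    by (simp add: rotate_rotate)
  ultimately have "rotate1 T = T"
    using fix1 by metis
  then have "T ! k = T ! nxt T k" if "k < length T" for k
    using that by (metis nth_rotate1 nxt_def Suc_eq_plus1)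
  with primitive_not_constant[OF assms] show False
    by blast
qed

lemma lexordp_append_same_length:
  fixes u :: "'a::linorder list"
  assumes "length u = length u'" "u \<noteq> u'"
  shows "ord_class.lexordp (u @ z) (u' @ z') \<longleftrightarrow> ord_class.lexordp u u'"
  using assms
proof (induction u arbitrary: u')
  case (Cons a u)
  then obtain b v where "u' = b # v"
    by (cases u') auto
  with Cons show ?case
    by (cases "a = b") auto
qed simp

lemma rotate_two_letters:
  assumes "i < length T" "2 \<le> length T"
  obtains v where "rotate i T = T ! i # T ! nxt T i # v"
    and "rotate (Suc i) T = T ! nxt T i # v @ [T ! i]"
proof -
  obtain x y v where R: "rotate i T = x # y # v"
    using assms(2) by (metis length_rotate Suc_le_length_iff numeral_2_eq_2)
  have "T \<noteq> []"
    using assms(1) by auto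
  then have "x = T ! i" "y = T ! nxt T i"
    using assms nth_rotate[of 0 T i] nth_rotate[of 1 T i]
    unfolding R nxt_def by auto
  with R that show ?thesis
    by simp
qed

lemma is_S_if_less:
  assumes "i < length T" "2 \<le> length T" "T ! i < T ! nxt T i"
  shows "is_S T i"
  using assms by (cases rule: rotate_two_letters[OF assms(1,2)]) (simp add: is_S_iff_rotate)

lemma is_L_if_greater:
  assumes "i < length T" "2 \<le> length T" "T ! nxt T i < T ! i"
  shows "is_L T i"
  using assms by (cases rule: rotate_two_letters[OF assms(1,2)]) (simp add: is_L_iff_rotate)

lemma is_L_iff_not_is_S:
  assumes "primitive T" "2 \<le> length T" "i < length T"
  shows "is_L T i \<longleftrightarrow> \<not> is_S T i"
  using assms rotate_neq_rotate_Suc[OF assms(1,2), of i]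
    lexordp_linear[of "rotate i T" "rotate (Suc i) T"] lexordp_antisym[of "rotate i T"]
  by (auto simp: is_S_iff_rotate is_L_iff_rotate)

lemma is_S_iff_is_S_nxt:
  assumes "primitive T" "2 \<le> length T" "i < length T" "T ! i = T ! nxt T i"
  shows "is_S T i \<longleftrightarrow> is_S T (nxt T i)"
proof -
  obtain v where v: "rotate i T = T ! i # T ! i # v" "rotate (Suc i) T = T ! i # v @ [T ! i]"
    using rotate_two_letters[OF assms(3,2)] assms(4) by metis
  have "T ! i # v \<noteq> v @ [T ! i]"
    using rotate_neq_rotate_Suc[OF assms(1,2), of "Suc i"] v by auto
  then have "ord_class.lexordp (T ! i # v) (v @ [T ! i]) \<longleftrightarrow>
      ord_class.lexordp ((T ! i # v) @ [T ! i]) ((v @ [T ! i]) @ [T ! i])"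
    using lexordp_append_same_length[of "T ! i # v" "v @ [T ! i]" "[T ! i]" "[T ! i]"] by simp
  then show ?thesis
    using assms v by (simp add: is_S_iff_rotate nxt_less rotate_nxt)
qed

lemma cyclic_chain:
  assumes "transp R" "\<forall>k<n. R (f k) (f (Suc k mod n))" "i < n" "j < n"
  shows "R (f i) (f j)"
proof -
  have reach: "R (f i) (f ((i + Suc d) mod n))" for d
  proof (induction d)
    case 0
    then show ?case
      using assms(2,3) by simp
  next
    case (Suc d)
    have "R (f ((i + Suc d) mod n)) (f (Suc ((i + Suc d) mod n) mod n))"
      using assms(2,3) by simp
    then show ?case
      using Suc assms(1) by (metis transpD add_Suc_right mod_Suc_eq)
  qed
  have "(i + Suc (j + n - Suc i)) mod n = j"
    using assms(3,4) by simp
  then show ?thesis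
    using reach by metis
qed

lemma exists_is_S:
  assumes "primitive T" "2 \<le> length T"
  shows "\<exists>i<length T. is_S T i"
proof (rule ccontr)
  assume "\<not> ?thesis"
  then have "\<forall>k<length T. T ! (Suc k mod length T) \<le> T ! k"
    using is_S_if_less[OF _ assms(2)] unfolding nxt_def by (metis Suc_eq_plus1 not_le)
  then have "T ! k = T ! nxt T k" if "k < length T" for k
    using cyclic_chain[of "(\<ge>)" "length T" "(!) T"] nxt_less[OF that] that
    by (simp add: transp_def nxt_def order_antisym)
  with primitive_not_constant[OF assms] show False
    by blast
qed

lemma exists_is_L:
  assumes "primitive T" "2 \<le> length T"
  shows "\<exists>i<length T. is_L T i"
proof (rule ccontr)
  assume "\<not> ?thesis"
  then have "\<forall>k<length T. T ! k \<le> T ! (Suc k mod length T)"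
    using is_L_if_greater[OF _ assms(2)] unfolding nxt_def by (metis Suc_eq_plus1 not_le)
  then have "T ! k = T ! nxt T k" if "k < length T" for k
    using cyclic_chain[of "(\<le>)" "length T" "(!) T"] nxt_less[OF that] that
    by (simp add: transp_def nxt_def order_antisym)
  with primitive_not_constant[OF assms] show False
    by blast
qed

lemma exists_is_LMS:
  assumes "primitive T" "2 \<le> length T"
  shows "\<exists>q<length T. is_LMS T q"
proof -
  define n where "n = length T"
  obtain l where l: "l < n" "is_L T l"
    using exists_is_L[OF assms] n_def by blast
  obtain s where s: "s < n" "is_S T s"
    using exists_is_S[OF assms] n_def by blast
  have "(l + (s + n - l)) mod n = s"
    using l(1) s(1) by simp
  then have "\<exists>d. is_S T ((l + d) mod n)"
    using s(2) by metis
  then obtain d where d: "is_S T ((l + d) mod n)" and below: "\<And>e. e < d \<Longrightarrow> \<not> is_S T ((l + e) mod n)"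
    unfolding exists_least_iff[of "\<lambda>d. is_S T ((l + d) mod n)"] by blast
  have "d \<noteq> 0"
  proof
    assume "d = 0"
    with d l(1) have "is_S T l"
      by simp
    with l show False
      using is_L_iff_not_is_S[OF assms] n_def by simp
  qed
  define q' where "q' = (l + (d - 1)) mod n"
  have q': "q' < n" "\<not> is_S T q'"
    using below[of "d - 1"] \<open>d \<noteq> 0\<close> l(1) unfolding q'_def by auto
  have "nxt T q' = (l + d) mod n"
    using \<open>d \<noteq> 0\<close> unfolding q'_def nxt_def n_def by (simp add: mod_Suc_eq)
  with d have "is_S T (nxt T q')"
    by simp
  moreover have "is_L T (prv T (nxt T q'))"
    using q' is_L_iff_not_is_S[OF assms] n_def by (simp add: prv_nxt)
  ultimately have "is_LMS T (nxt T q')"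
    unfolding is_LMS_def by simp
  then show ?thesis
    using nxt_less q'(1) n_def by blast
qed

lemma mod_add_right_cancel_nat:
  assumes "(i + d) mod n = (i' + d) mod (n::nat)"
  shows "i mod n = i' mod n"
proof -
  have "(int i + int d) mod int n = (int i' + int d) mod int n"
    using assms by (metis of_nat_add zmod_int)
  then have "int n dvd int i - int i'"
    by (simp add: mod_eq_dvd_iff)
  then show ?thesis
    by (metis mod_eq_dvd_iff zmod_int of_nat_eq_iff)
qed

context
  fixes T :: "'a::linorder list"
  assumes primitive: "primitive T" and length: "2 \<le> length T"
begin

lemma lms_dist_exists: "i < length T \<Longrightarrow> \<exists>d. 0 < d \<and> is_LMS T ((i + d) mod length T)"
proof -
  assume i: "i < length T"
  obtain q where q: "q < length T" "is_LMS T q"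
    using exists_is_LMS[OF primitive length] by blast
  show ?thesis
  proof (cases "i < q")
    case True
    then show ?thesis
      using q by (intro exI[of _ "q - i"]) simp
  next
    case False
    then have "(i + (q + length T - i)) mod length T = q"
      using q i by simp
    then show ?thesis
      using q i by (intro exI[of _ "q + length T - i"]) simp
  qed
qed

lemma is_LMS_lms_end: "i < length T \<Longrightarrow> is_LMS T (lms_end T i)"
  using LeastI_ex[OF lms_dist_exists] unfolding lms_dist_def lms_end_def by auto

lemma lms_dist_nxt:
  assumes "i < length T"
  shows "lms_dist T i = (if is_LMS T (nxt T i) then 1 else Suc (lms_dist T (nxt T i)))"
proof (cases "is_LMS T (nxt T i)")
  case True
  then show ?thesis
    unfolding lms_dist_def by (intro Least_equality) (auto simp: nxt_def)
next
  case False
  have shift: "(nxt T i + e) mod length T = Suc (i + e) mod length T" for e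
    unfolding nxt_def by (simp add: mod_add_left_eq)
  have "lms_dist T i = Suc (lms_dist T (nxt T i))"
    unfolding lms_dist_def[of T i]
  proof (rule Least_equality)
    show "0 < Suc (lms_dist T (nxt T i)) \<and> is_LMS T ((i + Suc (lms_dist T (nxt T i))) mod length T)"
      using is_LMS_lms_end[OF nxt_less[OF assms]] unfolding lms_end_def shift by simp
  next
    fix d
    assume d: "0 < d \<and> is_LMS T ((i + d) mod length T)"
    with False have "d \<noteq> 1"
      unfolding nxt_def by auto
    with d obtain e where e: "d = Suc e" "0 < e"
      by (metis One_nat_def gr0_implies_Suc gr0I)
    moreover have "is_LMS T ((nxt T i + e) mod length T)"
      using d e shift[of e] by simp
    ultimately have "lms_dist T (nxt T i) \<le> e"
      unfolding lms_dist_def by (intro Least_le) simp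
    with e show "Suc (lms_dist T (nxt T i)) \<le> d"
      by simp
  qed
  with False show ?thesis
    by simp
qed

lemma lms_end_nxt:
  "i < length T \<Longrightarrow> lms_end T i = (if is_LMS T (nxt T i) then nxt T i else lms_end T (nxt T i))"
  unfolding lms_end_def by (subst lms_dist_nxt) (auto simp: nxt_def mod_add_left_eq)

lemma lms_prefix_nxt:
  assumes "i < length T"
  shows "lms_prefix T i =
    T ! i # (if is_LMS T (nxt T i) then [T ! nxt T i] else lms_prefix T (nxt T i))"
proof (cases "is_LMS T (nxt T i)")
  case True
  then show ?thesis
    using assms lms_dist_nxt[OF assms] unfolding lms_prefix_def by (simp add: nxt_def)
next
  case False
  have shift: "(nxt T i + k) mod length T = (i + Suc k) mod length T" for k
    unfolding nxt_def by (simp add: mod_add_left_eq)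
  have "lms_prefix T i = T ! i # map (\<lambda>k. T ! ((i + Suc k) mod length T)) [0..<lms_dist T i]"
    using assms unfolding lms_prefix_def by (simp add: map_upt_Suc del: upt_Suc)
  with False show ?thesis
    using lms_dist_nxt[OF assms] unfolding lms_prefix_def shift by (simp del: upt_Suc)
qed

lemma lms_end_inj:
  assumes "i < length T" "i' < length T"
    and "lms_end T i = lms_end T i'" "lms_dist T i = lms_dist T i'"
  shows "i = i'"
  using assms mod_add_right_cancel_nat[of i "lms_dist T i" "length T" i'] unfolding lms_end_def by simp

end

lemma length_lms_prefix: "length (lms_prefix T i) = Suc (lms_dist T i)"
  unfolding lms_prefix_def by simp

lemma last_lms_prefix: "last (lms_prefix T i) = T ! lms_end T i"
  unfolding lms_prefix_def lms_end_def by simp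

section \<open>Writing elements into an array at prescribed slots\<close>

definition place :: "('b \<Rightarrow> nat) \<Rightarrow> 'b set \<Rightarrow> 'b option list \<Rightarrow> 'b option list" where
  "place f W B = map (\<lambda>k. if k \<in> f ` W then Some (the_inv_into W f k) else B ! k) [0..<length B]"

lemma length_place [simp]: "length (place f W B) = length B"
  unfolding place_def by simp

lemma place_empty [simp]: "place f {} B = B"
  unfolding place_def by (simp add: map_nth)

lemma nth_place:
  "k < length B \<Longrightarrow> place f W B ! k = (if k \<in> f ` W then Some (the_inv_into W f k) else B ! k)"
  unfolding place_def by simp

lemma nth_place_Some_iff:
  assumes "inj_on f W" "k < length B"
  shows "place f W B ! k = Some z \<longleftrightarrow> (z \<in> W \<and> f z = k) \<or> (k \<notin> f ` W \<and> B ! k = Some z)"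
  using assms by (auto simp: nth_place the_inv_into_f_f inj_on_eq_iff)

lemma nth_place_slot:
  assumes "inj_on f W" "x \<in> W" "f x < length B"
  shows "place f W B ! f x = Some x"
  using assms by (simp add: nth_place_Some_iff)

lemma place_insert:
  assumes "inj_on f (insert y W)" "f y < length B"
  shows "(place f W B)[f y := Some y] = place f (insert y W) B"
proof (rule nth_equalityI)
  fix k
  assume "k < length ((place f W B)[f y := Some y])"
  then have k: "k < length B"
    by simp
  show "(place f W B)[f y := Some y] ! k = place f (insert y W) B ! k"
  proof (cases "k = f y")
    case True
    then show ?thesis
      using k assms by (simp add: nth_place the_inv_into_f_f)
  next
    case False
    then have "k \<in> f ` insert y W \<longleftrightarrow> k \<in> f ` W"
      by auto
    moreover have "the_inv_into (insert y W) f k = the_inv_into W f k" if "k \<in> f ` W"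
      using that assms(1) inj_on_subset[OF assms(1)] by (auto simp: the_inv_into_f_f)
    ultimately show ?thesis
      using k False by (simp add: nth_place)
  qed
qed simp

lemma card_insert_same_value:
  assumes "finite A" "y \<notin> A"
  shows "card {x \<in> insert y A. f x = c} = card {x \<in> A. f x = c} + (if f y = c then 1 else 0)"
proof -
  have "{x \<in> insert y A. f x = c} = (if f y = c then insert y {x \<in> A. f x = c} else {x \<in> A. f x = c})"
    by auto
  with assms show ?thesis
    by simp
qed

section \<open>Ranks in a finite strict total order\<close>

lemma rank_strict_mono:
  assumes "finite P" "transp r" "irreflp r" "x \<in> P" "r x y"
  shows "card {z \<in> P. r z x} < card {z \<in> P. r z y}"
proof (rule psubset_card_mono)
  show "{z \<in> P. r z x} \<subset> {z \<in> P. r z y}"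
    using assms by (auto dest: transpD irreflpD)
qed (use assms in simp)

lemma bij_betw_rank:
  assumes "finite P" "transp r" "irreflp r" "totalp_on P r"
  shows "bij_betw (\<lambda>x. card {z \<in> P. r z x}) P {..<card P}"
proof -
  let ?rank = "\<lambda>x. card {z \<in> P. r z x}"
  have inj: "inj_on ?rank P"
  proof (rule inj_onI, rule ccontr)
    fix x y
    assume xy: "x \<in> P" "y \<in> P" "?rank x = ?rank y" "x \<noteq> y"
    then have "r x y \<or> r y x"
      using assms(4) unfolding totalp_on_def by blast
    then show False
      using rank_strict_mono[OF assms(1-3) xy(1), of y] rank_strict_mono[OF assms(1-3) xy(2), of x] xy(3)
      by auto
  qed
  have "?rank x < card P" if "x \<in> P" for x
    using assms(1,3) that by (intro psubset_card_mono) (auto dest: irreflpD)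
  then have "?rank ` P \<subseteq> {..<card P}"
    by auto
  moreover have "card (?rank ` P) = card {..<card P}"
    using card_image[OF inj] by simp
  ultimately have "?rank ` P = {..<card P}"
    by (intro card_subset_eq) auto
  with inj show ?thesis
    unfolding bij_betw_def by simp
qed

fun after :: "'b list \<Rightarrow> 'b \<Rightarrow> 'b set" where
  "after [] z = {}"
| "after (y # ys) z = (if z = y then set ys else after ys z)"

lemma after_subset: "after ys z \<subseteq> set ys"
  by (induction ys) auto

lemma finite_after [simp]: "finite (after ys z)"
  using finite_subset[OF after_subset finite_set] .

lemma not_in_after: "distinct ys \<Longrightarrow> z \<notin> after ys z"
  by (induction ys) auto

lemma after_append: "distinct (ps @ ys) \<Longrightarrow> z \<in> set ys \<Longrightarrow> after (ps @ ys) z = after ys z"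
  by (induction ps) auto

lemma in_after_cases:
  "z \<in> set ys \<Longrightarrow> z' \<in> set ys \<Longrightarrow> z \<noteq> z' \<Longrightarrow> z' \<in> after ys z \<or> z \<in> after ys z'"
  by (induction ys) auto

lemma after_mono: "distinct ys \<Longrightarrow> z' \<in> after ys z \<Longrightarrow> after ys z' \<subseteq> after ys z"
  by (induction ys) (auto dest: after_subset[THEN subsetD])

section \<open>Positions of the collection\<close>

locale induced_sorting =
  fixes Ts :: "'a::linorder list list" and ord :: "(nat \<times> nat) list"
  assumes primitive: "\<forall>T \<in> set Ts. primitive T \<and> 2 \<le> length T"
    and distinct_ord: "distinct ord" and set_ord: "set ord = lms_positions Ts"
begin

definition Pos :: "(nat \<times> nat) set" where
  "Pos = {(j, d). d < length Ts \<and> j < length (Ts ! d)}"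

definition letter :: "nat \<times> nat \<Rightarrow> 'a" where
  "letter x = Ts ! snd x ! fst x"

definition next_pos :: "nat \<times> nat \<Rightarrow> nat \<times> nat" where
  "next_pos x = (nxt (Ts ! snd x) (fst x), snd x)"

definition prev_pos :: "nat \<times> nat \<Rightarrow> nat \<times> nat" where
  "prev_pos x = (prv (Ts ! snd x) (fst x), snd x)"

definition S_type :: "nat \<times> nat \<Rightarrow> bool" where
  "S_type x \<longleftrightarrow> is_S (Ts ! snd x) (fst x)"

definition L_type :: "nat \<times> nat \<Rightarrow> bool" where
  "L_type x \<longleftrightarrow> is_L (Ts ! snd x) (fst x)"

definition LMS_type :: "nat \<times> nat \<Rightarrow> bool" where
  "LMS_type x \<longleftrightarrow> is_LMS (Ts ! snd x) (fst x)"

definition end_pos :: "nat \<times> nat \<Rightarrow> nat \<times> nat" where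
  "end_pos x = (lms_end (Ts ! snd x) (fst x), snd x)"

definition pref :: "nat \<times> nat \<Rightarrow> 'a list" where
  "pref x = lms_prefix (Ts ! snd x) (fst x)"

lemma Pos_iff: "x \<in> Pos \<longleftrightarrow> snd x < length Ts \<and> fst x < length (Ts ! snd x)"
  unfolding Pos_def by (cases x) auto

lemma primitive_nth: "d < length Ts \<Longrightarrow> primitive (Ts ! d)"
  using primitive by simp

lemma two_le_length_nth: "d < length Ts \<Longrightarrow> 2 \<le> length (Ts ! d)"
  using primitive by simp

lemma next_pos_in: "x \<in> Pos \<Longrightarrow> next_pos x \<in> Pos"
  unfolding Pos_iff next_pos_def by (simp add: nxt_less)

lemma prev_pos_in: "x \<in> Pos \<Longrightarrow> prev_pos x \<in> Pos"
  unfolding Pos_iff prev_pos_def by (simp add: prv_less)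

lemma next_prev_pos: "x \<in> Pos \<Longrightarrow> next_pos (prev_pos x) = x"
  unfolding Pos_iff next_pos_def prev_pos_def by (simp add: nxt_prv)

lemma prev_next_pos: "x \<in> Pos \<Longrightarrow> prev_pos (next_pos x) = x"
  unfolding Pos_iff next_pos_def prev_pos_def by (simp add: prv_nxt)

lemma next_pos_neq:
  assumes "x \<in> Pos"
  shows "next_pos x \<noteq> x"
proof -
  obtain j d where x: "x = (j, d)" "d < length Ts" "j < length (Ts ! d)"
    using assms by (cases x) (auto simp: Pos_iff)
  have "Suc j mod length (Ts ! d) \<noteq> j"
    using two_le_length_nth[OF x(2)] x(3) by (cases "Suc j = length (Ts ! d)") auto
  with x(1) show ?thesis
    by (simp add: next_pos_def nxt_def)
qed

lemma L_type_iff_not_S_type: "x \<in> Pos \<Longrightarrow> L_type x \<longleftrightarrow> \<not> S_type x"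
  unfolding Pos_iff L_type_def S_type_def using is_L_iff_not_is_S primitive_nth two_le_length_nth
  by blast

lemma LMS_type_iff: "LMS_type x \<longleftrightarrow> S_type x \<and> L_type (prev_pos x)"
  unfolding LMS_type_def S_type_def L_type_def prev_pos_def is_LMS_def by simp

lemma S_type_if_LMS_type: "LMS_type x \<Longrightarrow> S_type x"
  by (simp add: LMS_type_iff)

lemma not_L_type_if_LMS_type: "x \<in> Pos \<Longrightarrow> LMS_type x \<Longrightarrow> \<not> L_type x"
  using S_type_if_LMS_type L_type_iff_not_S_type by blast

lemma L_type_if_LMS_type_next: "x \<in> Pos \<Longrightarrow> LMS_type (next_pos x) \<Longrightarrow> L_type x"
  by (simp add: LMS_type_iff prev_next_pos)

lemma L_type_next: "x \<in> Pos \<Longrightarrow> L_type x \<Longrightarrow> L_type (next_pos x) \<or> LMS_type (next_pos x)"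
  using L_type_iff_not_S_type[OF next_pos_in] by (auto simp: LMS_type_iff prev_next_pos)

lemma letter_le_next_if_S_type:
  assumes "x \<in> Pos" "S_type x"
  shows "letter x \<le> letter (next_pos x)"
proof (rule ccontr)
  obtain j d where x: "x = (j, d)" "d < length Ts" "j < length (Ts ! d)"
    using assms(1) by (cases x) (auto simp: Pos_iff)
  assume "\<not> ?thesis"
  then have "L_type x"
    using is_L_if_greater[OF x(3) two_le_length_nth[OF x(2)]] x(1)
    by (simp add: letter_def next_pos_def L_type_def)
  with assms show False
    by (simp add: L_type_iff_not_S_type)
qed

lemma letter_next_le_if_L_type:
  assumes "x \<in> Pos" "L_type x"
  shows "letter (next_pos x) \<le> letter x"
proof (rule ccontr)
  obtain j d where x: "x = (j, d)" "d < length Ts" "j < length (Ts ! d)"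
    using assms(1) by (cases x) (auto simp: Pos_iff)
  assume "\<not> ?thesis"
  then have "S_type x"
    using is_S_if_less[OF x(3) two_le_length_nth[OF x(2)]] x(1)
    by (simp add: letter_def next_pos_def S_type_def)
  with assms show False
    by (simp add: L_type_iff_not_S_type)
qed

lemma S_type_iff_next_if_same_letter:
  assumes "x \<in> Pos" "letter (next_pos x) = letter x"
  shows "S_type x \<longleftrightarrow> S_type (next_pos x)"
proof -
  obtain j d where x: "x = (j, d)" "d < length Ts" "j < length (Ts ! d)"
    using assms(1) by (cases x) (auto simp: Pos_iff)
  show ?thesis
    using is_S_iff_is_S_nxt[OF primitive_nth[OF x(2)] two_le_length_nth[OF x(2)] x(3)] assms(2) x(1)
    by (simp add: letter_def next_pos_def S_type_def)
qed

lemma letter_next_less_if_LMS_type_next: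
  assumes "x \<in> Pos" "LMS_type (next_pos x)"
  shows "letter (next_pos x) < letter x"
proof -
  have "L_type x" "S_type (next_pos x)"
    using assms by (simp_all add: L_type_if_LMS_type_next S_type_if_LMS_type)
  then have "letter (next_pos x) \<noteq> letter x"
    using assms(1) S_type_iff_next_if_same_letter L_type_iff_not_S_type by blast
  then show ?thesis
    using letter_next_le_if_L_type[OF assms(1) \<open>L_type x\<close>] by simp
qed

lemma end_pos_in:
  assumes "x \<in> Pos"
  shows "end_pos x \<in> Pos"
proof -
  have "0 < length (Ts ! snd x)"
    using assms unfolding Pos_iff by (meson le0 le_less_trans)
  then show ?thesis
    using assms unfolding Pos_iff end_pos_def lms_end_def by simp
qed

lemma LMS_type_end_pos: "x \<in> Pos \<Longrightarrow> LMS_type (end_pos x)"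
  unfolding Pos_iff LMS_type_def end_pos_def
  by (simp add: is_LMS_lms_end[OF primitive_nth two_le_length_nth])

lemma end_pos_next:
  "x \<in> Pos \<Longrightarrow> end_pos x = (if LMS_type (next_pos x) then next_pos x else end_pos (next_pos x))"
  unfolding Pos_iff LMS_type_def end_pos_def next_pos_def
  using lms_end_nxt[OF primitive_nth two_le_length_nth, of "snd x" "fst x"] by simp

lemma pref_next:
  assumes "x \<in> Pos"
  shows "pref x = letter x # (if LMS_type (next_pos x) then [letter (next_pos x)] else pref (next_pos x))"
proof -
  obtain j d where x: "x = (j, d)" "d < length Ts" "j < length (Ts ! d)"
    using assms by (cases x) (auto simp: Pos_iff)
  show ?thesis
    using lms_prefix_nxt[OF primitive_nth[OF x(2)] two_le_length_nth[OF x(2)] x(3)]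
    unfolding x(1) pref_def letter_def next_pos_def LMS_type_def by simp
qed

lemma last_pref: "last (pref x) = letter (end_pos x)"
  unfolding pref_def end_pos_def letter_def by (simp add: last_lms_prefix)

lemma end_pos_inj:
  assumes "x \<in> Pos" "y \<in> Pos" "end_pos x = end_pos y" "length (pref x) = length (pref y)"
  shows "x = y"
proof -
  obtain j d j' where xy: "x = (j, d)" "y = (j', d)"
    using assms(3) unfolding end_pos_def by (cases x, cases y) auto
  have d: "d < length Ts" "j < length (Ts ! d)" "j' < length (Ts ! d)"
    using assms(1,2) unfolding xy Pos_iff by simp_all
  have "lms_end (Ts ! d) j = lms_end (Ts ! d) j'"
    using assms(3) unfolding xy end_pos_def by simp
  moreover have "lms_dist (Ts ! d) j = lms_dist (Ts ! d) j'"
    using assms(4) unfolding xy pref_def length_lms_prefix by simp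
  ultimately have "j = j'"
    using lms_end_inj[OF primitive_nth[OF d(1)] two_le_length_nth[OF d(1)] d(2,3)] by blast
  with xy show ?thesis
    by simp
qed

lemma lms_positions_eq: "lms_positions Ts = {x \<in> Pos. LMS_type x}"
  unfolding lms_positions_def Pos_def LMS_type_def by auto

lemma in_set_ord_iff: "x \<in> set ord \<longleftrightarrow> x \<in> Pos \<and> LMS_type x"
  using set_ord lms_positions_eq by auto

end

section \<open>Buckets and the first step\<close>

context induced_sorting
begin

lemma card_Pos_letter: "card {x \<in> Pos. Q (letter x)} = sum_list (map (\<lambda>T. length (filter Q T)) Ts)"
proof -
  have "{x \<in> Pos. Q (letter x)} =
      prod.swap ` (SIGMA d:{..<length Ts}. {j. j < length (Ts ! d) \<and> Q (Ts ! d ! j)})"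
    unfolding Pos_def letter_def by auto
  then have "card {x \<in> Pos. Q (letter x)} = (\<Sum>d<length Ts. card {j. j < length (Ts ! d) \<and> Q (Ts ! d ! j)})"
    by (simp add: card_image)
  also have "\<dots> = sum_list (map (\<lambda>T. length (filter Q T)) Ts)"
    by (simp add: length_filter_conv_card sum_list_sum_nth atLeast0LessThan)
  finally show ?thesis .
qed

lemma finite_Pos: "finite Pos"
  unfolding Pos_def by (rule finite_subset[of _ "{..<Max (length ` set Ts)} \<times> {..<length Ts}"])
    (auto simp: less_le_trans[OF _ Max_ge])

lemma total_len_eq_card: "total_len Ts = card Pos"
  using card_Pos_letter[of "\<lambda>_. True"] unfolding total_len_def by simp

lemma bstart_eq_card: "bstart Ts c = card {x \<in> Pos. letter x < c}"
  unfolding bstart_def using card_Pos_letter[of "\<lambda>a. a < c"] by simp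

lemma bend_eq_card: "bend Ts c = card {x \<in> Pos. letter x \<le> c}"
  unfolding bend_def using card_Pos_letter[of "\<lambda>a. a \<le> c"] by simp

lemma bend_le_bstart: "c < c' \<Longrightarrow> bend Ts c \<le> bstart Ts c'"
  unfolding bend_eq_card bstart_eq_card using finite_Pos by (intro card_mono) auto

lemma bend_le_total_len: "bend Ts c \<le> total_len Ts"
  unfolding bend_eq_card total_len_eq_card using finite_Pos by (intro card_mono) auto

definition L_count :: "'a \<Rightarrow> nat" where
  "L_count c = card {x \<in> Pos. L_type x \<and> letter x = c}"

definition S_count :: "'a \<Rightarrow> nat" where
  "S_count c = card {x \<in> Pos. S_type x \<and> letter x = c}"

lemma bend_eq_bstart_plus_counts: "bend Ts c = bstart Ts c + L_count c + S_count c"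
proof -
  have "{x \<in> Pos. letter x \<le> c} = {x \<in> Pos. letter x < c} \<union> {x \<in> Pos. letter x = c}"
    by auto
  moreover have "card ({x \<in> Pos. letter x < c} \<union> {x \<in> Pos. letter x = c}) =
      card {x \<in> Pos. letter x < c} + card {x \<in> Pos. letter x = c}"
    using finite_Pos by (intro card_Un_disjoint) auto
  ultimately have "bend Ts c = bstart Ts c + card {x \<in> Pos. letter x = c}"
    unfolding bend_eq_card bstart_eq_card by simp
  moreover have "{x \<in> Pos. letter x = c} =
      {x \<in> Pos. L_type x \<and> letter x = c} \<union> {x \<in> Pos. S_type x \<and> letter x = c}"
    using L_type_iff_not_S_type by auto
  moreover have "card ({x \<in> Pos. L_type x \<and> letter x = c} \<union> {x \<in> Pos. S_type x \<and> letter x = c}) =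
      L_count c + S_count c"
    unfolding L_count_def S_count_def using finite_Pos L_type_iff_not_S_type
    by (intro card_Un_disjoint) auto
  ultimately show ?thesis
    by simp
qed

end

context induced_sorting
begin

definition lms_slot :: "nat \<times> nat \<Rightarrow> nat" where
  "lms_slot z = bend Ts (letter z) - Suc (card {w \<in> after ord z. letter w = letter z})"

lemma card_after_same_letter_less:
  assumes "z \<in> set ord"
  shows "card {w \<in> after ord z. letter w = letter z} < S_count (letter z)"
proof -
  have "{w \<in> after ord z. letter w = letter z} \<subset> {w \<in> set ord. letter w = letter z}"
    using assms after_subset not_in_after[OF distinct_ord] by fastforce
  then have "card {w \<in> after ord z. letter w = letter z} < card {w \<in> set ord. letter w = letter z}"
    by (intro psubset_card_mono) auto
  also have "\<dots> \<le> S_count (letter z)"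
    unfolding S_count_def using finite_Pos in_set_ord_iff S_type_if_LMS_type
    by (intro card_mono) auto
  finally show ?thesis .
qed

lemma lms_slot_bounds:
  assumes "z \<in> set ord"
  shows "bstart Ts (letter z) + L_count (letter z) \<le> lms_slot z" "lms_slot z < bend Ts (letter z)"
  using card_after_same_letter_less[OF assms] bend_eq_bstart_plus_counts[of "letter z"]
  unfolding lms_slot_def by linarith+

lemma lms_slot_less_total_len: "z \<in> set ord \<Longrightarrow> lms_slot z < total_len Ts"
  using lms_slot_bounds(2) bend_le_total_len less_le_trans by blast

lemma lms_slot_less_if_after:
  assumes "z \<in> set ord" "z' \<in> after ord z" "letter z' = letter z"
  shows "lms_slot z < lms_slot z'"
proof -
  have "{w \<in> after ord z'. letter w = letter z} \<subset> {w \<in> after ord z. letter w = letter z}"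
    using assms after_mono[OF distinct_ord] not_in_after[OF distinct_ord] by fastforce
  then have "card {w \<in> after ord z'. letter w = letter z} < card {w \<in> after ord z. letter w = letter z}"
    by (intro psubset_card_mono) auto
  with card_after_same_letter_less[OF assms(1)] show ?thesis
    using bend_eq_bstart_plus_counts[of "letter z"] assms(3) unfolding lms_slot_def by simp
qed

lemma inj_on_lms_slot: "inj_on lms_slot (set ord)"
proof (rule inj_onI, rule ccontr)
  fix z z'
  assume z: "z \<in> set ord" "z' \<in> set ord" "lms_slot z = lms_slot z'" "z \<noteq> z'"
  consider "letter z < letter z'" | "letter z' < letter z" | "letter z = letter z'"
    by fastforce
  then show False
  proof cases
    case 1
    then show ?thesis
      using z lms_slot_bounds[of z] lms_slot_bounds[of z'] bend_le_bstart[OF 1] by linarith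
  next
    case 2
    then show ?thesis
      using z lms_slot_bounds[of z] lms_slot_bounds[of z'] bend_le_bstart[OF 2] by linarith
  next
    case 3
    then show ?thesis
      using z in_after_cases[of z ord z'] lms_slot_less_if_after by (metis less_irrefl)
  qed
qed

lemma step1_put_eq:
  "step1_put Ts (A, tp) y = (A[tp (letter y) - 1 := Some y], tp(letter y := tp (letter y) - 1))"
  by (cases y) (simp add: step1_put_def letter_def Let_def)

lemma step1_suffix:
  assumes "suffix ys ord"
  shows "foldl (step1_put Ts) (replicate (total_len Ts) None, bend Ts) (rev ys) =
    (place lms_slot (set ys) (replicate (total_len Ts) None),
     \<lambda>c. bend Ts c - card {z \<in> set ys. letter z = c})"
  using assms
proof (induction ys)
  case (Cons y ys)
  let ?B = "replicate (total_len Ts) None"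
  obtain ps where ord: "ord = ps @ y # ys"
    using Cons.prems unfolding suffix_def by blast
  then have y: "y \<in> set ord" "y \<notin> set ys"
    using distinct_ord by auto
  have "after ord y = set ys"
    using distinct_ord unfolding ord by (simp add: after_append)
  then have slot: "lms_slot y = bend Ts (letter y) - card {z \<in> set ys. letter z = letter y} - 1"
    unfolding lms_slot_def by simp
  have "set (y # ys) \<subseteq> set ord"
    unfolding ord by auto
  then have "inj_on lms_slot (insert y (set ys))"
    by (intro inj_on_subset[OF inj_on_lms_slot]) simp
  then have placed: "(place lms_slot (set ys) ?B)[lms_slot y := Some y] = place lms_slot (set (y # ys)) ?B"
    using lms_slot_less_total_len[OF y(1)] by (simp add: place_insert)
  have counted: "card {z \<in> set (y # ys). letter z = c} =
      card {z \<in> set ys. letter z = c} + (if letter y = c then 1 else 0)" for c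
    using card_insert_same_value[OF finite_set y(2), of letter c] by simp
  have "foldl (step1_put Ts) (?B, bend Ts) (rev (y # ys)) =
      step1_put Ts (place lms_slot (set ys) ?B, \<lambda>c. bend Ts c - card {z \<in> set ys. letter z = c}) y"
    using Cons.IH[OF suffix_ConsD[OF Cons.prems]] by simp
  also have "\<dots> = ((place lms_slot (set ys) ?B)[lms_slot y := Some y],
      (\<lambda>c. bend Ts c - card {z \<in> set ys. letter z = c})(letter y := lms_slot y))"
    by (simp add: step1_put_eq slot)
  also have "\<dots> = (place lms_slot (set (y # ys)) ?B, \<lambda>c. bend Ts c - card {z \<in> set (y # ys). letter z = c})"
  proof -
    have "(\<lambda>c. bend Ts c - card {z \<in> set ys. letter z = c})(letter y := lms_slot y) =
        (\<lambda>c. bend Ts c - card {z \<in> set (y # ys). letter z = c})"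
      using counted slot by (auto simp: fun_eq_iff)
    with placed show ?thesis
      by simp
  qed
  finally show ?case .
qed simp

lemma step1_eq_place: "step1 Ts ord = place lms_slot (set ord) (replicate (total_len Ts) None)"
  unfolding step1_def using step1_suffix[of ord] by simp

lemma step1_nth_Some_iff:
  assumes "k < total_len Ts"
  shows "step1 Ts ord ! k = Some z \<longleftrightarrow> z \<in> set ord \<and> lms_slot z = k"
  using assms inj_on_lms_slot by (simp add: step1_eq_place nth_place_Some_iff)

lemma length_step1: "length (step1 Ts ord) = total_len Ts"
  by (simp add: step1_eq_place)

end

section \<open>The order in which induced sorting arranges positions\<close>

context induced_sorting
begin

definition key :: "nat \<times> nat \<Rightarrow> (bool \<times> 'a \<times> nat) list" where
  "key x = map (\<lambda>c. (False, c, 0)) (pref x) @ [(True, letter (end_pos x), lms_slot (end_pos x))]"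

definition key_tail :: "nat \<times> nat \<Rightarrow> (bool \<times> 'a \<times> nat) list" where
  "key_tail z =
    (if LMS_type z then [(False, letter z, 0), (True, letter z, lms_slot z)] else key z)"

definition key_less :: "nat \<times> nat \<Rightarrow> nat \<times> nat \<Rightarrow> bool" where
  "key_less x y \<longleftrightarrow> ord_class.lexordp (key x) (key y)"

lemma key_next: "x \<in> Pos \<Longrightarrow> key x = (False, letter x, 0) # key_tail (next_pos x)"
  unfolding key_def key_tail_def using pref_next[of x] end_pos_next[of x] by simp

lemma key_tail_Cons: "z \<in> Pos \<Longrightarrow> \<exists>r. key_tail z = (False, letter z, 0) # r"
  unfolding key_tail_def using key_next by simp

lemma key_Cons_Cons: "x \<in> Pos \<Longrightarrow> \<exists>r. key x = (False, letter x, 0) # (False, letter (next_pos x), 0) # r"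
  using key_next key_tail_Cons next_pos_in by fastforce

lemma key_less_irrefl: "\<not> key_less x x"
  unfolding key_less_def by (simp add: lexordp_irreflexive')

lemma key_less_trans: "key_less x y \<Longrightarrow> key_less y z \<Longrightarrow> key_less x z"
  unfolding key_less_def using lexordp_trans by blast

lemma key_less_asym: "key_less x y \<Longrightarrow> \<not> key_less y x"
  unfolding key_less_def using lexordp_antisym by blast

lemma key_inj:
  assumes "x \<in> Pos" "y \<in> Pos" "key x = key y"
  shows "x = y"
proof -
  let ?letters = "map (\<lambda>c. (False, c, 0::nat))"
  have "length (?letters (pref x)) = length (?letters (pref y))"
    using arg_cong[OF assms(3), of length] unfolding key_def by simp
  then have "?letters (pref x) = ?letters (pref y)" "lms_slot (end_pos x) = lms_slot (end_pos y)"
    using assms(3) unfolding key_def by auto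
  then have "pref x = pref y" "end_pos x = end_pos y"
    using inj_on_lms_slot end_pos_in LMS_type_end_pos assms(1,2) in_set_ord_iff
    by (auto dest: map_injective simp: inj_on_def)
  then show ?thesis
    using end_pos_inj[OF assms(1,2)] by simp
qed

lemma key_less_total: "x \<in> Pos \<Longrightarrow> y \<in> Pos \<Longrightarrow> x \<noteq> y \<Longrightarrow> key_less x y \<or> key_less y x"
  unfolding key_less_def using lexordp_linear key_inj by blast

lemma letter_le_if_key_less: "x \<in> Pos \<Longrightarrow> y \<in> Pos \<Longrightarrow> key_less x y \<Longrightarrow> letter x \<le> letter y"
  unfolding key_less_def using key_next by fastforce

lemma key_less_if_letter_less: "x \<in> Pos \<Longrightarrow> y \<in> Pos \<Longrightarrow> letter x < letter y \<Longrightarrow> key_less x y"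
  unfolding key_less_def using key_next by simp

lemma key_less_iff_next_if_S_type:
  assumes "x \<in> Pos" "y \<in> Pos" "S_type x" "S_type y" "letter x = letter y"
  shows "key_less x y \<longleftrightarrow> key_less (next_pos x) (next_pos y)"
proof -
  have "\<not> LMS_type (next_pos x)" "\<not> LMS_type (next_pos y)"
    using assms L_type_if_LMS_type_next L_type_iff_not_S_type by blast+
  then show ?thesis
    using assms unfolding key_less_def by (simp add: key_next key_tail_def)
qed

lemma length_pref_next: "x \<in> Pos \<Longrightarrow> \<not> LMS_type (next_pos x) \<Longrightarrow> length (pref (next_pos x)) < length (pref x)"
  using pref_next[of x] by simp

lemma key_less_if_L_type_S_type:
  assumes "x \<in> Pos" "y \<in> Pos" "L_type x" "S_type y" "letter x = letter y"
  shows "key_less x y"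
  using assms
proof (induction "length (pref x)" arbitrary: x y rule: less_induct)
  case less
  have "ord_class.lexordp (key_tail (next_pos x)) (key_tail (next_pos y))"
  proof (cases "letter (next_pos x) < letter (next_pos y)")
    case True
    obtain r r' where "key_tail (next_pos x) = (False, letter (next_pos x), 0) # r"
      "key_tail (next_pos y) = (False, letter (next_pos y), 0) # r'"
      using key_tail_Cons[OF next_pos_in[OF less.prems(1)]] key_tail_Cons[OF next_pos_in[OF less.prems(2)]]
      by blast
    with True show ?thesis
      by simp
  next
    case False
    then have same: "letter (next_pos x) = letter x" "letter (next_pos y) = letter y"
      using letter_next_le_if_L_type[OF less.prems(1,3)] letter_le_next_if_S_type[OF less.prems(2,4)]
        less.prems(5) by auto
    have not_LMS: "\<not> LMS_type (next_pos x)" "\<not> LMS_type (next_pos y)"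
      using same letter_next_less_if_LMS_type_next[OF less.prems(1)] letter_next_less_if_LMS_type_next[OF less.prems(2)]
      by auto
    have "L_type (next_pos x)" "S_type (next_pos y)"
      using less.prems same S_type_iff_next_if_same_letter
        L_type_iff_not_S_type[OF less.prems(1)] L_type_iff_not_S_type[OF next_pos_in[OF less.prems(1)]]
      by auto
    then have "key_less (next_pos x) (next_pos y)"
      using less.hyps[OF length_pref_next[OF less.prems(1) not_LMS(1)]] next_pos_in less.prems same by simp
    then show ?thesis
      using not_LMS unfolding key_less_def key_tail_def by simp
  qed
  then show ?case
    using less.prems(5) unfolding key_less_def key_next[OF less.prems(1)] key_next[OF less.prems(2)] by simp
qed

lemma key_less_next_iff_S_type:
  assumes "x \<in> Pos" "letter (next_pos x) = letter x"
  shows "key_less x (next_pos x) \<longleftrightarrow> S_type x"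
  using assms
proof (induction "length (pref x)" arbitrary: x rule: less_induct)
  case less
  let ?y = "next_pos x"
  have y: "?y \<in> Pos" "S_type ?y \<longleftrightarrow> S_type x"
    using less.prems next_pos_in S_type_iff_next_if_same_letter by auto
  have not_LMS: "\<not> LMS_type ?y"
    using letter_next_less_if_LMS_type_next less.prems by fastforce
  then have "key_less x ?y \<longleftrightarrow> ord_class.lexordp (key ?y) (key_tail (next_pos ?y))"
    using less.prems(2) unfolding key_less_def key_next[OF less.prems(1)] key_next[OF y(1)] key_tail_def
    by simp
  also have "\<dots> \<longleftrightarrow> S_type ?y"
  proof (cases "letter (next_pos ?y) = letter ?y")
    case True
    then have "\<not> LMS_type (next_pos ?y)"
      using letter_next_less_if_LMS_type_next y(1) by fastforce
    then show ?thesis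
      using less.hyps[OF length_pref_next[OF less.prems(1) not_LMS] y(1) True]
      unfolding key_less_def key_tail_def by simp
  next
    case False
    obtain r where "key_tail (next_pos ?y) = (False, letter (next_pos ?y), 0) # r"
      using key_tail_Cons[OF next_pos_in[OF y(1)]] by blast
    then have "ord_class.lexordp (key ?y) (key_tail (next_pos ?y)) \<longleftrightarrow> letter ?y < letter (next_pos ?y)"
      using False key_next[OF y(1)] by auto
    also have "\<dots> \<longleftrightarrow> S_type ?y"
      using False letter_le_next_if_S_type[OF y(1)] letter_next_le_if_L_type[OF y(1)]
        L_type_iff_not_S_type[OF y(1)] by fastforce
    finally show ?thesis .
  qed
  finally show ?case
    using y(2) by simp
qed

end

context induced_sorting
begin

definition rank :: "nat \<times> nat \<Rightarrow> nat" where
  "rank x = card {y \<in> Pos. key_less y x}"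

lemma bij_betw_rank_Pos: "bij_betw rank Pos {..<total_len Ts}"
proof -
  have "transp key_less"
    using key_less_trans by (blast intro: transpI)
  moreover have "irreflp key_less"
    using key_less_irrefl by (simp add: irreflp_on_def)
  moreover have "totalp_on Pos key_less"
    unfolding totalp_on_def using key_less_total by blast
  ultimately show ?thesis
    unfolding rank_def total_len_eq_card by (rule bij_betw_rank[OF finite_Pos])
qed

lemma rank_less_total_len: "x \<in> Pos \<Longrightarrow> rank x < total_len Ts"
  using bij_betw_rank_Pos by (auto dest: bij_betw_apply)

lemma rank_inj: "x \<in> Pos \<Longrightarrow> y \<in> Pos \<Longrightarrow> rank x = rank y \<Longrightarrow> x = y"
  using bij_betw_rank_Pos by (auto dest: bij_betw_imp_inj_on inj_onD)

lemma rank_surj: "k < total_len Ts \<Longrightarrow> \<exists>x \<in> Pos. rank x = k"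
  using bij_betw_rank_Pos unfolding bij_betw_def by (metis imageE lessThan_iff)

lemma rank_less_rank: "x \<in> Pos \<Longrightarrow> key_less x y \<Longrightarrow> rank x < rank y"
  unfolding rank_def using finite_Pos key_less_trans key_less_irrefl
  by (intro rank_strict_mono) (auto intro: transpI simp: irreflp_on_def)

lemma rank_less_iff: "x \<in> Pos \<Longrightarrow> y \<in> Pos \<Longrightarrow> rank x < rank y \<longleftrightarrow> key_less x y"
  using rank_less_rank key_less_total by (metis less_asym less_irrefl)

lemma rank_L_type:
  assumes "x \<in> Pos" "L_type x"
  shows "rank x = bstart Ts (letter x) + card {y \<in> Pos. L_type y \<and> letter y = letter x \<and> key_less y x}"
proof -
  have "letter y < letter x \<or> L_type y \<and> letter y = letter x"
    if "y \<in> Pos" "key_less y x" for y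
    using that assms letter_le_if_key_less[of y x] key_less_if_L_type_S_type[of x y]
      key_less_asym L_type_iff_not_S_type by fastforce
  then have "{y \<in> Pos. key_less y x} =
      {y \<in> Pos. letter y < letter x} \<union> {y \<in> Pos. L_type y \<and> letter y = letter x \<and> key_less y x}"
    using assms key_less_if_letter_less by blast
  moreover have "card ({y \<in> Pos. letter y < letter x} \<union> {y \<in> Pos. L_type y \<and> letter y = letter x \<and> key_less y x}) =
      card {y \<in> Pos. letter y < letter x} + card {y \<in> Pos. L_type y \<and> letter y = letter x \<and> key_less y x}"
    using finite_Pos by (intro card_Un_disjoint) auto
  ultimately show ?thesis
    unfolding rank_def bstart_eq_card by simp
qed

lemma rank_S_type:
  assumes "x \<in> Pos" "S_type x"
  shows "rank x = bend Ts (letter x) - Suc (card {y \<in> Pos. S_type y \<and> letter y = letter x \<and> key_less x y})"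
proof -
  let ?above = "{y \<in> Pos. S_type y \<and> letter y = letter x \<and> key_less x y}"
  have "key_less y x \<or> y = x \<or> S_type y \<and> letter y = letter x \<and> key_less x y"
    if "y \<in> Pos" "letter y \<le> letter x" for y
    using that assms key_less_total[of x y] letter_le_if_key_less[of x y] key_less_if_L_type_S_type[of y x]
      key_less_asym L_type_iff_not_S_type by fastforce
  moreover have "letter y \<le> letter x" if "y \<in> Pos" "key_less y x" for y
    using that assms letter_le_if_key_less by blast
  ultimately have "{y \<in> Pos. letter y \<le> letter x} = {y \<in> Pos. key_less y x} \<union> insert x ?above"
    using assms(1) by (intro equalityI subsetI) auto
  moreover have "{y \<in> Pos. key_less y x} \<inter> insert x ?above = {}" "x \<notin> ?above"
    using key_less_irrefl key_less_asym by blast+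
  then have "card ({y \<in> Pos. key_less y x} \<union> insert x ?above) = rank x + Suc (card ?above)"
    unfolding rank_def using finite_Pos by (simp add: card_Un_disjoint)
  ultimately show ?thesis
    unfolding bend_eq_card by simp
qed

end

context induced_sorting
begin

lemma rank_bounds_L_type:
  assumes "x \<in> Pos" "L_type x"
  shows "bstart Ts (letter x) \<le> rank x" "rank x < bstart Ts (letter x) + L_count (letter x)"
proof -
  have "{y \<in> Pos. L_type y \<and> letter y = letter x \<and> key_less y x} \<subset> {y \<in> Pos. L_type y \<and> letter y = letter x}"
    using assms key_less_irrefl by blast
  then have "card {y \<in> Pos. L_type y \<and> letter y = letter x \<and> key_less y x} < L_count (letter x)"
    unfolding L_count_def using finite_Pos by (intro psubset_card_mono) auto
  then show "bstart Ts (letter x) \<le> rank x" "rank x < bstart Ts (letter x) + L_count (letter x)"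
    using rank_L_type[OF assms] by simp_all
qed

lemma rank_bounds_S_type:
  assumes "x \<in> Pos" "S_type x"
  shows "bstart Ts (letter x) + L_count (letter x) \<le> rank x" "rank x < bend Ts (letter x)"
proof -
  have "{y \<in> Pos. S_type y \<and> letter y = letter x \<and> key_less x y} \<subset> {y \<in> Pos. S_type y \<and> letter y = letter x}"
    using assms key_less_irrefl by blast
  then have "card {y \<in> Pos. S_type y \<and> letter y = letter x \<and> key_less x y} < S_count (letter x)"
    unfolding S_count_def using finite_Pos by (intro psubset_card_mono) auto
  then show "bstart Ts (letter x) + L_count (letter x) \<le> rank x" "rank x < bend Ts (letter x)"
    using rank_S_type[OF assms] bend_eq_bstart_plus_counts[of "letter x"] by simp_all
qed

lemma rank_bounds:
  assumes "x \<in> Pos"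
  shows "bstart Ts (letter x) \<le> rank x" "rank x < bend Ts (letter x)"
  using rank_bounds_L_type[OF assms] rank_bounds_S_type[OF assms] L_type_iff_not_S_type[OF assms]
    bend_eq_bstart_plus_counts[of "letter x"] by (cases "L_type x"; simp)+

lemma rank_less_rank_next_if_S_type:
  assumes "x \<in> Pos" "S_type x"
  shows "rank x < rank (next_pos x)"
proof -
  have "key_less x (next_pos x)"
    using assms letter_le_next_if_S_type[OF assms] key_less_next_iff_S_type[OF assms(1)]
      key_less_if_letter_less[OF assms(1) next_pos_in[OF assms(1)]]
    by (cases "letter x = letter (next_pos x)") auto
  then show ?thesis
    using rank_less_rank[OF assms(1)] by blast
qed

definition step2_slot :: "nat \<times> nat \<Rightarrow> nat" where
  "step2_slot z = (if L_type z then rank z else lms_slot z)"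

lemma rank_neq_lms_slot:
  assumes "x \<in> Pos" "L_type x" "z \<in> set ord"
  shows "rank x \<noteq> lms_slot z"
proof -
  note bounds = rank_bounds_L_type[OF assms(1,2)] rank_bounds[OF assms(1)] lms_slot_bounds[OF assms(3)]
  consider "letter x < letter z" | "letter x = letter z" | "letter z < letter x"
    by fastforce
  then show ?thesis
  proof cases
    case 1
    then show ?thesis
      using bounds bend_le_bstart[OF 1] by linarith
  next
    case 2
    then show ?thesis
      using bounds by simp
  next
    case 3
    then show ?thesis
      using bounds bend_le_bstart[OF 3] by linarith
  qed
qed

lemma inj_on_step2_slot: "inj_on step2_slot {z \<in> Pos. L_type z \<or> LMS_type z}"
proof (rule inj_onI)
  fix z z'
  assume "z \<in> {z \<in> Pos. L_type z \<or> LMS_type z}" "z' \<in> {z \<in> Pos. L_type z \<or> LMS_type z}"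
    and eq: "step2_slot z = step2_slot z'"
  then have z: "z \<in> Pos" "L_type z \<or> z \<in> set ord" and z': "z' \<in> Pos" "L_type z' \<or> z' \<in> set ord"
    using in_set_ord_iff by auto
  show "z = z'"
    using z z' eq rank_inj inj_on_lms_slot rank_neq_lms_slot in_set_ord_iff not_L_type_if_LMS_type
    unfolding step2_slot_def inj_on_def by metis
qed

lemma step2_slot_bounds:
  assumes "z \<in> Pos" "L_type z \<or> LMS_type z"
  shows "bstart Ts (letter z) \<le> step2_slot z" "step2_slot z < bend Ts (letter z)"
    and "L_type z \<longleftrightarrow> step2_slot z < bstart Ts (letter z) + L_count (letter z)"
  using assms rank_bounds_L_type[OF assms(1)] rank_bounds[OF assms(1)] lms_slot_bounds[of z]
    in_set_ord_iff[of z] not_L_type_if_LMS_type[OF assms(1)] unfolding step2_slot_def by auto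

lemma step2_slot_less_if_key_tail_less:
  assumes z: "z \<in> Pos" "L_type z \<or> LMS_type z" and z': "z' \<in> Pos" "L_type z' \<or> LMS_type z'"
    and less: "ord_class.lexordp (key_tail z) (key_tail z')"
  shows "step2_slot z < step2_slot z'"
proof -
  note bounds = step2_slot_bounds[OF z] step2_slot_bounds[OF z']
  obtain r r' where "key_tail z = (False, letter z, 0) # r" "key_tail z' = (False, letter z', 0) # r'"
    using key_tail_Cons z(1) z'(1) by blast
  then have "letter z < letter z' \<or> letter z = letter z'"
    using less by auto
  then show ?thesis
  proof
    assume "letter z < letter z'"
    then show ?thesis
      using bounds bend_le_bstart by (meson le_less_trans less_le_trans)
  next
    assume same: "letter z = letter z'"
    show ?thesis
    proof (cases "LMS_type z"; cases "LMS_type z'")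
      assume "LMS_type z" "LMS_type z'"
      then show ?thesis
        using less same not_L_type_if_LMS_type[OF z(1)] not_L_type_if_LMS_type[OF z'(1)]
        unfolding key_tail_def step2_slot_def by auto
    next
      assume "LMS_type z" "\<not> LMS_type z'"
      then show ?thesis
        using less same key_Cons_Cons[OF z'(1)] unfolding key_tail_def by auto
    next
      assume "\<not> LMS_type z" "LMS_type z'"
      then show ?thesis
        using bounds same z(2) not_L_type_if_LMS_type[OF z'(1)] by auto
    next
      assume "\<not> LMS_type z" "\<not> LMS_type z'"
      then show ?thesis
        using z z' less rank_less_rank unfolding key_tail_def key_less_def step2_slot_def by simp
    qed
  qed
qed

lemma key_tail_next_less_key:
  assumes "x \<in> Pos" "L_type x"
  shows "ord_class.lexordp (key_tail (next_pos x)) (key x)"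
proof (cases "letter (next_pos x) < letter x")
  case True
  then show ?thesis
    using key_tail_Cons[OF next_pos_in[OF assms(1)]] key_next[OF assms(1)] by auto
next
  case False
  then have same: "letter (next_pos x) = letter x"
    using letter_next_le_if_L_type[OF assms] by simp
  then have "\<not> LMS_type (next_pos x)"
    using letter_next_less_if_LMS_type_next[OF assms(1)] by auto
  moreover have "\<not> key_less x (next_pos x)"
    using key_less_next_iff_S_type[OF assms(1) same] assms L_type_iff_not_S_type by blast
  then have "key_less (next_pos x) x"
    using key_less_total[OF assms(1) next_pos_in[OF assms(1)]] next_pos_neq[OF assms(1)] by metis
  ultimately show ?thesis
    unfolding key_less_def key_tail_def by simp
qed

lemma step2_slot_next_less_rank:
  assumes "x \<in> Pos" "L_type x"
  shows "step2_slot (next_pos x) < rank x"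
proof -
  have "\<not> LMS_type x"
    using assms S_type_if_LMS_type L_type_iff_not_S_type by blast
  then have "step2_slot (next_pos x) < step2_slot x"
    using assms next_pos_in L_type_next key_tail_next_less_key
    by (intro step2_slot_less_if_key_tail_less) (auto simp: key_tail_def)
  with assms show ?thesis
    by (simp add: step2_slot_def)
qed

lemma step2_slot_next_less:
  assumes "w \<in> Pos" "y \<in> Pos" "L_type w" "L_type y" "letter w = letter y" "key_less w y"
  shows "step2_slot (next_pos w) < step2_slot (next_pos y)"
proof -
  have "ord_class.lexordp (key_tail (next_pos w)) (key_tail (next_pos y))"
    using assms(6) unfolding key_less_def key_next[OF assms(1)] key_next[OF assms(2)] assms(5) by simp
  then show ?thesis
    using assms next_pos_in L_type_next by (intro step2_slot_less_if_key_tail_less) auto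
qed

end

section \<open>The second step\<close>

context induced_sorting
begin

definition induced_L :: "nat \<Rightarrow> (nat \<times> nat) set" where
  "induced_L p = {x \<in> Pos. L_type x \<and> step2_slot (next_pos x) < p}"

definition step2_heads :: "nat \<Rightarrow> 'a \<Rightarrow> nat" where
  "step2_heads p c = bstart Ts c + card {x \<in> induced_L p. letter x = c}"

lemma step2_at_eq: "step2_at Ts (A, hp) p = (case A ! p of
    None \<Rightarrow> (A, hp)
  | Some z \<Rightarrow> if L_type (prev_pos z)
      then (A[hp (letter (prev_pos z)) := Some (prev_pos z)],
            hp(letter (prev_pos z) := hp (letter (prev_pos z)) + 1))
      else (A, hp))"
  by (cases "A ! p") (auto simp: step2_at_def prev_pos_def L_type_def letter_def Let_def)

lemma inj_on_rank: "W \<subseteq> Pos \<Longrightarrow> inj_on rank W"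
  using rank_inj by (meson inj_onI subsetD)

lemma step2_entry_Some:
  assumes "p < total_len Ts" "z \<in> Pos" "L_type z \<or> LMS_type z" "step2_slot z = p"
  shows "place rank (induced_L p) (step1 Ts ord) ! p = Some z"
proof (cases "L_type z")
  case True
  then have "z \<in> induced_L p" "rank z = p"
    using assms step2_slot_next_less_rank[of z] by (simp_all add: induced_L_def step2_slot_def)
  then show ?thesis
    using nth_place_slot[OF inj_on_rank, of "induced_L p" z] assms(1)
    by (simp add: induced_L_def length_step1)
next
  case False
  then have z: "z \<in> set ord" "lms_slot z = p"
    using assms in_set_ord_iff by (auto simp: step2_slot_def)
  have "p \<notin> rank ` induced_L p"
  proof
    assume "p \<in> rank ` induced_L p"
    then obtain x where "p = rank x" "x \<in> induced_L p"
      by (rule imageE)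
    then have "x \<in> Pos" "L_type x"
      by (simp_all add: induced_L_def)
    with z(2) \<open>p = rank x\<close> show False
      using rank_neq_lms_slot[OF _ _ z(1), of x] by simp
  qed
  then show ?thesis
    using z assms(1) step1_nth_Some_iff[of p z] by (simp add: nth_place length_step1)
qed

lemma step2_entry_None:
  assumes "p < total_len Ts" "\<nexists>z. z \<in> Pos \<and> (L_type z \<or> LMS_type z) \<and> step2_slot z = p"
  shows "place rank (induced_L p) (step1 Ts ord) ! p = None"
proof -
  have "p \<notin> rank ` induced_L p"
  proof
    assume "p \<in> rank ` induced_L p"
    then obtain x where "p = rank x" "x \<in> induced_L p"
      by (rule imageE)
    then have "x \<in> Pos" "L_type x" "step2_slot x = p"
      by (simp_all add: induced_L_def step2_slot_def)
    with assms(2) show False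
      by blast
  qed
  moreover have "step1 Ts ord ! p = None"
    using assms step1_nth_Some_iff[OF assms(1)] in_set_ord_iff not_L_type_if_LMS_type
    by (metis not_Some_eq step2_slot_def)
  ultimately show ?thesis
    using assms(1) by (simp add: nth_place length_step1)
qed

lemma induced_L_Suc:
  "induced_L (Suc p) = induced_L p \<union> {x \<in> Pos. L_type x \<and> step2_slot (next_pos x) = p}"
  unfolding induced_L_def by auto

lemma induced_L_Suc_if_entry:
  assumes "z \<in> Pos" "L_type z \<or> LMS_type z" "step2_slot z = p"
  shows "induced_L (Suc p) = (if L_type (prev_pos z) then insert (prev_pos z) (induced_L p) else induced_L p)"
proof -
  have unique: "x = prev_pos z" if "x \<in> Pos" "L_type x" "step2_slot (next_pos x) = p" for x
  proof -
    have "next_pos x \<in> {z \<in> Pos. L_type z \<or> LMS_type z}" "z \<in> {z \<in> Pos. L_type z \<or> LMS_type z}"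
      using that next_pos_in L_type_next assms by simp_all
    then have "next_pos x = z"
      using inj_onD[OF inj_on_step2_slot, of "next_pos x" z] that(3) assms(3) by simp
    then show ?thesis
      using prev_next_pos[OF that(1)] by simp
  qed
  then have "{x \<in> Pos. L_type x \<and> step2_slot (next_pos x) = p} \<subseteq> {prev_pos z}"
    by blast
  moreover have "prev_pos z \<in> Pos" "step2_slot (next_pos (prev_pos z)) = p"
    using assms prev_pos_in next_prev_pos by simp_all
  ultimately have "{x \<in> Pos. L_type x \<and> step2_slot (next_pos x) = p} =
      (if L_type (prev_pos z) then {prev_pos z} else {})"
    by (auto simp: subset_singleton_iff)
  then show ?thesis
    unfolding induced_L_Suc
    by (cases "L_type (prev_pos z)") (simp_all only: if_True if_False Un_empty_right Un_insert_right)
qed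

lemma induced_L_Suc_if_no_entry:
  assumes "\<nexists>z. z \<in> Pos \<and> (L_type z \<or> LMS_type z) \<and> step2_slot z = p"
  shows "induced_L (Suc p) = induced_L p"
proof -
  have "{x \<in> Pos. L_type x \<and> step2_slot (next_pos x) = p} = {}"
  proof (rule equals0I)
    fix x
    assume "x \<in> {x \<in> Pos. L_type x \<and> step2_slot (next_pos x) = p}"
    then show False
      using assms next_pos_in L_type_next by blast
  qed
  then show ?thesis
    unfolding induced_L_Suc by (simp only: Un_empty_right)
qed

lemma rank_eq_step2_heads:
  assumes "y \<in> Pos" "L_type y"
  shows "rank y = step2_heads (step2_slot (next_pos y)) (letter y)"
proof -
  have "key_less x y" if "x \<in> induced_L (step2_slot (next_pos y))" "letter x = letter y" for x
  proof -
    have x: "x \<in> Pos" "L_type x" "step2_slot (next_pos x) < step2_slot (next_pos y)"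
      using that unfolding induced_L_def by auto
    then have "x \<noteq> y" "\<not> key_less y x"
      using step2_slot_next_less[OF assms(1) x(1) assms(2) x(2)] that(2) by auto
    then show ?thesis
      using key_less_total x(1) assms(1) by blast
  qed
  then have "{x \<in> Pos. L_type x \<and> letter x = letter y \<and> key_less x y} =
      {x \<in> induced_L (step2_slot (next_pos y)). letter x = letter y}"
    using step2_slot_next_less[OF _ assms(1) _ assms(2)] unfolding induced_L_def by auto
  then show ?thesis
    unfolding step2_heads_def rank_L_type[OF assms] by simp
qed

lemma step2_heads_insert:
  assumes "induced_L (Suc p) = insert y (induced_L p)" "y \<notin> induced_L p"
  shows "(step2_heads p)(letter y := step2_heads p (letter y) + 1) = step2_heads (Suc p)"
proof -
  have "finite (induced_L p)"
    using finite_Pos by (simp add: induced_L_def)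
  then show ?thesis
    using assms card_insert_same_value[of "induced_L p" y letter] by (auto simp: step2_heads_def fun_eq_iff)
qed

lemma step2_scan_step:
  assumes "p < total_len Ts"
  shows "step2_at Ts (place rank (induced_L p) (step1 Ts ord), step2_heads p) p =
    (place rank (induced_L (Suc p)) (step1 Ts ord), step2_heads (Suc p))"
proof (cases "\<exists>z. z \<in> Pos \<and> (L_type z \<or> LMS_type z) \<and> step2_slot z = p")
  case False
  then have "place rank (induced_L p) (step1 Ts ord) ! p = None"
    by (rule step2_entry_None[OF assms])
  moreover have "induced_L (Suc p) = induced_L p"
    using induced_L_Suc_if_no_entry[OF False] .
  ultimately show ?thesis
    by (simp add: step2_at_eq step2_heads_def fun_eq_iff)
next
  case True
  then obtain z where z: "z \<in> Pos" "L_type z \<or> LMS_type z" "step2_slot z = p"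
    by blast
  let ?y = "prev_pos z"
  have entry: "place rank (induced_L p) (step1 Ts ord) ! p = Some z"
    using step2_entry_Some[OF assms z] .
  show ?thesis
  proof (cases "L_type ?y")
    case False
    then have "induced_L (Suc p) = induced_L p"
      using induced_L_Suc_if_entry[OF z] by simp
    then show ?thesis
      using entry False by (simp add: step2_at_eq step2_heads_def fun_eq_iff)
  next
    case True
    have y: "?y \<in> Pos" "step2_slot (next_pos ?y) = p"
      using z prev_pos_in next_prev_pos by simp_all
    have induced: "induced_L (Suc p) = insert ?y (induced_L p)" "?y \<notin> induced_L p"
      using induced_L_Suc_if_entry[OF z] True y(2) by (simp_all add: induced_L_def)
    have head: "step2_heads p (letter ?y) = rank ?y"
      using rank_eq_step2_heads[OF y(1) True] y(2) by simp
    have "inj_on rank (insert ?y (induced_L p))"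
      using y(1) by (intro inj_on_rank) (auto simp: induced_L_def)
    then have "(place rank (induced_L p) (step1 Ts ord))[rank ?y := Some ?y] =
        place rank (induced_L (Suc p)) (step1 Ts ord)"
      using induced rank_less_total_len[OF y(1)] by (simp add: place_insert length_step1)
    then show ?thesis
      using entry True head step2_heads_insert[OF induced] by (simp add: step2_at_eq)
  qed
qed

lemma step2_scan:
  "p \<le> total_len Ts \<Longrightarrow> foldl (step2_at Ts) (step1 Ts ord, bstart Ts) [0..<p] =
    (place rank (induced_L p) (step1 Ts ord), step2_heads p)"
proof (induction p)
  case 0
  have "induced_L 0 = {}"
    by (simp add: induced_L_def)
  then show ?case
    by (simp add: step2_heads_def)
next
  case (Suc p)
  then show ?case
    using step2_scan_step by simp
qed

lemma step2_eq_place: "step2 Ts (step1 Ts ord) = place rank {x \<in> Pos. L_type x} (step1 Ts ord)"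
proof -
  have "step2_slot (next_pos x) < total_len Ts" if "x \<in> Pos" "L_type x" for x
    using step2_slot_next_less_rank[OF that] rank_less_total_len[OF that(1)] by simp
  then have "induced_L (total_len Ts) = {x \<in> Pos. L_type x}"
    unfolding induced_L_def by blast
  then show ?thesis
    unfolding step2_def using step2_scan[of "total_len Ts"] by simp
qed

end

section \<open>The third step\<close>

context induced_sorting
begin

definition induced_S :: "nat \<Rightarrow> (nat \<times> nat) set" where
  "induced_S p = {x \<in> Pos. S_type x \<and> p \<le> rank (next_pos x)}"

definition step3_tails :: "nat \<Rightarrow> 'a \<Rightarrow> nat" where
  "step3_tails p c = bend Ts c - card {x \<in> induced_S p. letter x = c}"

lemma step3_at_eq: "step3_at Ts (A, tp) p = (case A ! p of
    None \<Rightarrow> (A, tp)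
  | Some z \<Rightarrow> if S_type (prev_pos z)
      then (A[tp (letter (prev_pos z)) - 1 := Some (prev_pos z)],
            tp(letter (prev_pos z) := tp (letter (prev_pos z)) - 1))
      else (A, tp))"
  by (cases "A ! p") (auto simp: step3_at_def prev_pos_def S_type_def letter_def Let_def)

lemma length_step2: "length (step2 Ts (step1 Ts ord)) = total_len Ts"
  by (simp add: step2_eq_place length_step1)

lemma nth_place_rank_step2:
  assumes "W \<subseteq> {x \<in> Pos. S_type x}" "z \<in> Pos" "S_type z \<Longrightarrow> z \<in> W"
  shows "place rank W (step2 Ts (step1 Ts ord)) ! rank z = Some z"
proof -
  have "W \<subseteq> Pos"
    using assms(1) by blast
  then have inj: "inj_on rank W"
    by (rule inj_on_rank)
  show ?thesis
  proof (cases "S_type z")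
    case True
    have "rank z < length (step2 Ts (step1 Ts ord))"
      using rank_less_total_len[OF assms(2)] by (simp add: length_step2)
    then show ?thesis
      by (rule nth_place_slot[OF inj assms(3)[OF True]])
  next
    case False
    have "rank z \<notin> rank ` W"
    proof
      assume "rank z \<in> rank ` W"
      then obtain x where "rank z = rank x" "x \<in> W"
        by (rule imageE)
      with assms(1,2) False show False
        using rank_inj[of z x] by auto
    qed
    moreover have "L_type z"
      using False assms(2) L_type_iff_not_S_type by blast
    then have "step2 Ts (step1 Ts ord) ! rank z = Some z"
      using nth_place_slot[OF inj_on_rank, of "{x \<in> Pos. L_type x}" z "step1 Ts ord"] assms(2)
        rank_less_total_len[OF assms(2)] by (simp add: step2_eq_place length_step1)
    ultimately show ?thesis
      using rank_less_total_len[OF assms(2)] by (simp add: nth_place length_step2)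
  qed
qed

lemma step3_entry:
  assumes "z \<in> Pos" "rank z = p"
  shows "place rank (induced_S (Suc p)) (step2 Ts (step1 Ts ord)) ! p = Some z"
proof -
  have "induced_S (Suc p) \<subseteq> {x \<in> Pos. S_type x}"
    unfolding induced_S_def by blast
  moreover have "z \<in> induced_S (Suc p)" if "S_type z"
    using assms rank_less_rank_next_if_S_type[OF assms(1) that] that by (simp add: induced_S_def Suc_le_eq)
  ultimately have "place rank (induced_S (Suc p)) (step2 Ts (step1 Ts ord)) ! rank z = Some z"
    by (rule nth_place_rank_step2[OF _ assms(1)])
  with assms(2) show ?thesis
    by simp
qed

lemma induced_S_eq_Suc:
  "induced_S p = induced_S (Suc p) \<union> {x \<in> Pos. S_type x \<and> rank (next_pos x) = p}"
  unfolding induced_S_def by auto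

lemma induced_S_if_entry:
  assumes "z \<in> Pos" "rank z = p"
  shows "induced_S p = (if S_type (prev_pos z) then insert (prev_pos z) (induced_S (Suc p)) else induced_S (Suc p))"
proof -
  have "x = prev_pos z" if "x \<in> Pos" "S_type x" "rank (next_pos x) = p" for x
    using rank_inj[OF next_pos_in[OF that(1)] assms(1)] that assms(2) prev_next_pos[OF that(1)] by simp
  then have "{x \<in> Pos. S_type x \<and> rank (next_pos x) = p} \<subseteq> {prev_pos z}"
    by blast
  moreover have "prev_pos z \<in> Pos" "rank (next_pos (prev_pos z)) = p"
    using assms prev_pos_in next_prev_pos by simp_all
  ultimately have "{x \<in> Pos. S_type x \<and> rank (next_pos x) = p} =
      (if S_type (prev_pos z) then {prev_pos z} else {})"
    by (auto simp: subset_singleton_iff)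
  then show ?thesis
    unfolding induced_S_eq_Suc[of p]
    by (cases "S_type (prev_pos z)") (simp_all only: if_True if_False Un_empty_right Un_insert_right)
qed

lemma rank_eq_step3_tails:
  assumes "y \<in> Pos" "S_type y"
  shows "rank y = step3_tails (Suc (rank (next_pos y))) (letter y) - 1"
proof -
  have "key_less y x" if "x \<in> induced_S (Suc (rank (next_pos y)))" "letter x = letter y" for x
  proof -
    have x: "x \<in> Pos" "S_type x" "rank (next_pos y) < rank (next_pos x)"
      using that unfolding induced_S_def by auto
    then have "x \<noteq> y" "\<not> key_less x y"
      using key_less_iff_next_if_S_type[OF x(1) assms(1) x(2) assms(2)] that(2)
        rank_less_iff[OF next_pos_in[OF x(1)] next_pos_in[OF assms(1)]] by auto
    then show ?thesis
      using key_less_total x(1) assms(1) by blast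
  qed
  moreover have "rank (next_pos y) < rank (next_pos x)"
    if "x \<in> Pos" "S_type x" "letter x = letter y" "key_less y x" for x
    using that assms key_less_iff_next_if_S_type[OF assms(1) that(1) assms(2) that(2)]
      rank_less_iff[OF next_pos_in[OF assms(1)] next_pos_in[OF that(1)]] by simp
  ultimately have "{x \<in> Pos. S_type x \<and> letter x = letter y \<and> key_less y x} =
      {x \<in> induced_S (Suc (rank (next_pos y))). letter x = letter y}"
    unfolding induced_S_def by (auto simp: Suc_le_eq)
  then show ?thesis
    unfolding step3_tails_def rank_S_type[OF assms] by simp
qed

lemma step3_tails_insert:
  assumes "induced_S p = insert y (induced_S (Suc p))" "y \<notin> induced_S (Suc p)"
  shows "(step3_tails (Suc p))(letter y := step3_tails (Suc p) (letter y) - 1) = step3_tails p"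
proof -
  have "finite (induced_S (Suc p))"
    using finite_Pos by (simp add: induced_S_def)
  then show ?thesis
    using assms card_insert_same_value[of "induced_S (Suc p)" y letter] by (auto simp: step3_tails_def fun_eq_iff)
qed

lemma step3_scan_step:
  assumes "p < total_len Ts"
  shows "step3_at Ts (place rank (induced_S (Suc p)) (step2 Ts (step1 Ts ord)), step3_tails (Suc p)) p =
    (place rank (induced_S p) (step2 Ts (step1 Ts ord)), step3_tails p)"
proof -
  obtain z where z: "z \<in> Pos" "rank z = p"
    using rank_surj[OF assms] by blast
  let ?y = "prev_pos z"
  note entry = step3_entry[OF z]
  show ?thesis
  proof (cases "S_type ?y")
    case False
    then have "induced_S p = induced_S (Suc p)"
      using induced_S_if_entry[OF z] by simp
    then show ?thesis
      using entry False by (simp add: step3_at_eq step3_tails_def fun_eq_iff)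
  next
    case True
    have y: "?y \<in> Pos" "rank (next_pos ?y) = p"
      using z prev_pos_in next_prev_pos by simp_all
    have induced: "induced_S p = insert ?y (induced_S (Suc p))" "?y \<notin> induced_S (Suc p)"
      using induced_S_if_entry[OF z] True y(2) by (simp_all add: induced_S_def)
    have tail: "step3_tails (Suc p) (letter ?y) - 1 = rank ?y"
      using rank_eq_step3_tails[OF y(1) True] y(2) by simp
    have "inj_on rank (insert ?y (induced_S (Suc p)))"
      using y(1) by (intro inj_on_rank) (auto simp: induced_S_def)
    then have "(place rank (induced_S (Suc p)) (step2 Ts (step1 Ts ord)))[rank ?y := Some ?y] =
        place rank (induced_S p) (step2 Ts (step1 Ts ord))"
      using induced rank_less_total_len[OF y(1)] by (simp add: place_insert length_step2)
    then show ?thesis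
      using entry True tail step3_tails_insert[OF induced] by (simp add: step3_at_eq)
  qed
qed

lemma step3_scan:
  "q \<le> total_len Ts \<Longrightarrow> foldl (step3_at Ts) (step2 Ts (step1 Ts ord), bend Ts) (rev [q..<total_len Ts]) =
    (place rank (induced_S q) (step2 Ts (step1 Ts ord)), step3_tails q)"
proof (induction q rule: inc_induct)
  case base
  have "induced_S (total_len Ts) = {}"
    using rank_less_total_len next_pos_in by (fastforce simp: induced_S_def)
  then show ?case
    by (simp add: step3_tails_def)
next
  case (step q)
  then have "rev [q..<total_len Ts] = rev [Suc q..<total_len Ts] @ [q]"
    by (simp add: upt_conv_Cons)
  with step show ?case
    using step3_scan_step by simp
qed

lemma induced_sort_eq_place:
  "induced_sort Ts ord = place rank {x \<in> Pos. S_type x} (step2 Ts (step1 Ts ord))"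
proof -
  have "induced_S 0 = {x \<in> Pos. S_type x}"
    by (simp add: induced_S_def)
  then show ?thesis
    unfolding induced_sort_def step3_def using step3_scan[of 0] by simp
qed

lemma induced_sort_nth_Some_iff:
  assumes "k < total_len Ts"
  shows "induced_sort Ts ord ! k = Some x \<longleftrightarrow> x \<in> Pos \<and> rank x = k"
proof -
  obtain z where z: "z \<in> Pos" "rank z = k"
    using rank_surj[OF assms] by blast
  have "induced_sort Ts ord ! rank z = Some z"
    unfolding induced_sort_eq_place using z(1) by (rule nth_place_rank_step2[OF order_refl]) (simp add: z(1))
  then have "induced_sort Ts ord ! k = Some x \<longleftrightarrow> x = z"
    using z(2) by auto
  also have "\<dots> \<longleftrightarrow> x \<in> Pos \<and> rank x = k"
    using z rank_inj[of x z] by auto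
  finally show ?thesis .
qed

end

lemma lexordp_terminated_if_lms_less:
  fixes U V :: "'a::linorder list"
  assumes "lms_less U V"
  shows "ord_class.lexordp (map (\<lambda>c. (False, c, n)) U @ [(True, t)]) (map (\<lambda>c. (False, c, n)) V @ [(True, t')])"
  using assms unfolding lms_less_def
proof (elim disjE conjE)
  assume "strict_prefix V U"
  then obtain c r where "U = V @ c # r"
    by (metis prefix_def strict_prefix_def append_Nil2 neq_Nil_conv)
  then show ?thesis
    by (simp add: lexordp_append_left_rightI)
next
  assume "\<not> prefix U V" "\<not> prefix V U" "ord_class.lexordp U V"
  then obtain w a b r s where "a < b" "U = w @ a # r" "V = w @ b # s"
    by (auto simp: lexordp_iff prefix_def)
  then show ?thesis
    by (simp add: lexordp_append_left_rightI)
qed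

context induced_sorting
begin

lemma key_less_if_lms_less: "lms_less (pref x) (pref y) \<Longrightarrow> key_less x y"
  unfolding key_less_def key_def by (rule lexordp_terminated_if_lms_less)

lemma key_less_iff_if_pref_eq:
  assumes "x \<in> Pos" "y \<in> Pos" "pref x = pref y"
  shows "key_less x y \<longleftrightarrow> lms_slot (end_pos x) < lms_slot (end_pos y)"
proof -
  have "letter (end_pos x) = letter (end_pos y)"
    using assms(3) last_pref by metis
  then show ?thesis
    unfolding key_less_def key_def assms(3)
    using lexordp_append_leftI lexordp_append_leftD[of _ "[_]" "[_]"] by fastforce
qed

lemma induced_sort_order_iff:
  assumes "k < total_len Ts" "k' < total_len Ts"
    and "induced_sort Ts ord ! k = Some x" "induced_sort Ts ord ! k' = Some y"
  shows "k < k' \<longleftrightarrow> key_less x y"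
proof -
  have "x \<in> Pos" "y \<in> Pos" "rank x = k" "rank y = k'"
    using assms induced_sort_nth_Some_iff by blast+
  then show ?thesis
    using rank_less_iff by blast
qed

lemma step1_order_iff:
  assumes "z \<in> set ord" "z' \<in> set ord"
  shows "(\<exists>q q'. q < q' \<and> q' < total_len Ts \<and> step1 Ts ord ! q = Some z \<and> step1 Ts ord ! q' = Some z')
    \<longleftrightarrow> lms_slot z < lms_slot z'"
proof
  assume "\<exists>q q'. q < q' \<and> q' < total_len Ts \<and> step1 Ts ord ! q = Some z \<and> step1 Ts ord ! q' = Some z'"
  then obtain q q' where "q < q'" "q' < total_len Ts" "step1 Ts ord ! q = Some z" "step1 Ts ord ! q' = Some z'"
    by blast
  then show "lms_slot z < lms_slot z'"
    using step1_nth_Some_iff[of q z] step1_nth_Some_iff[of q' z'] by simp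
next
  assume "lms_slot z < lms_slot z'"
  moreover have "step1 Ts ord ! lms_slot z = Some z" "step1 Ts ord ! lms_slot z' = Some z'"
    using assms lms_slot_less_total_len step1_nth_Some_iff by blast+
  ultimately show "\<exists>q q'. q < q' \<and> q' < total_len Ts \<and> step1 Ts ord ! q = Some z \<and> step1 Ts ord ! q' = Some z'"
    using lms_slot_less_total_len[OF assms(2)] by blast
qed

end

theorem lemma4:
  fixes Ts :: "'a::linorder list list" and ord :: "(nat \<times> nat) list"
    and a b i j :: nat
  assumes prim: "\<forall>T \<in> set Ts. primitive T \<and> length T \<ge> 2"
    and ab: "a < length Ts" "b < length Ts"
    and ij: "i < length (Ts ! a)" "j < length (Ts ! b)"
    and ord: "distinct ord" "set ord = lms_positions Ts"
  shows "(lms_less (lms_prefix (Ts ! a) i) (lms_prefix (Ts ! b) j) \<longrightarrow>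
            (\<forall>k1 k2. k1 < total_len Ts \<and> k2 < total_len Ts \<and>
               induced_sort Ts ord ! k1 = Some (i, a) \<and> induced_sort Ts ord ! k2 = Some (j, b)
               \<longrightarrow> k1 < k2))
       \<and> (lms_prefix (Ts ! a) i = lms_prefix (Ts ! b) j \<longrightarrow>
            (\<forall>k1 k2. k1 < total_len Ts \<and> k2 < total_len Ts \<and>
               induced_sort Ts ord ! k1 = Some (i, a) \<and> induced_sort Ts ord ! k2 = Some (j, b)
               \<longrightarrow> (k1 < k2 \<longleftrightarrow>
                    (\<exists>q1 q2. q1 < q2 \<and> q2 < total_len Ts \<and>
                       step1 Ts ord ! q1 = Some (lms_end (Ts ! a) i, a) \<and>
                       step1 Ts ord ! q2 = Some (lms_end (Ts ! b) j, b)))))"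
proof -
  interpret induced_sorting Ts ord
    using prim ord by unfold_locales auto
  have x: "(i, a) \<in> Pos" and y: "(j, b) \<in> Pos"
    using ab ij by (simp_all add: Pos_iff)
  then have "end_pos (i, a) \<in> set ord" "end_pos (j, b) \<in> set ord"
    using end_pos_in LMS_type_end_pos in_set_ord_iff by blast+
  note step1_order = step1_order_iff[OF this, unfolded end_pos_def fst_conv snd_conv]
  show ?thesis
    using induced_sort_order_iff key_less_if_lms_less[of "(i, a)" "(j, b)"]
      key_less_iff_if_pref_eq[OF x y] step1_order
    unfolding pref_def end_pos_def by auto
qed

end
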